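(* Let $[0,1]$ be the closed real unit interval, regarded as a complete lattice with $\sup$ and $\inf$, and let $\mathbf L=[0,1]\times\{0,1\}$ be the product lattice (componentwise order, $0<1$). Then every element of $\mathbf L$ is a non-generator, except for $(0,1)$ and $(1,0)$. Hence the set $\Gamma$ of non-generators of $\mathbf L$ is not a complete sublattice, and the complete sublattice generated by $\Gamma$ is all of $L$.
   Context: A complete sublattice of a complete lattice $\mathbf L$ is a subset $T\subseteq L$ closed under arbitrary meets and joins computed in $L$, including those of the empty set (so $T$ contains the minimum and maximum of $L$). For $X\subseteq L$, $\langle X\rangle$ is the intersection of all complete sublattices containing $X$, and $\langle X,a\rangle=\langle X\cup\{a\}\rangle$. An element $a$ is a non-generator if for every $X\subseteq L$, $\langle X,a\rangle=L$ implies $\langle X\rangle=L$. *)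

theory Defs
  imports Main "HOL.Real"
begin

text \<open>Joins/meets computed in A are least upper / greatest
lower bounds in A (for S = {} these are the minimum / maximum of A).\<close>

definition is_lub :: "'a set \<Rightarrow> ('a \<Rightarrow> 'a \<Rightarrow> bool) \<Rightarrow> 'a set \<Rightarrow> 'a \<Rightarrow> bool" where
  "is_lub A le S x \<longleftrightarrow> x \<in> A \<and> (\<forall>s\<in>S. le s x) \<and> (\<forall>y\<in>A. (\<forall>s\<in>S. le s y) \<longrightarrow> le x y)"

definition is_glb :: "'a set \<Rightarrow> ('a \<Rightarrow> 'a \<Rightarrow> bool) \<Rightarrow> 'a set \<Rightarrow> 'a \<Rightarrow> bool" where
  "is_glb A le S x \<longleftrightarrow> x \<in> A \<and> (\<forall>s\<in>S. le x s) \<and> (\<forall>y\<in>A. (\<forall>s\<in>S. le y s) \<longrightarrow> le y x)"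

definition complete_sublattice :: "'a set \<Rightarrow> ('a \<Rightarrow> 'a \<Rightarrow> bool) \<Rightarrow> 'a set \<Rightarrow> bool" where
  "complete_sublattice A le T \<longleftrightarrow> T \<subseteq> A \<and>
     (\<forall>S. S \<subseteq> T \<longrightarrow> (\<forall>x. is_lub A le S x \<longrightarrow> x \<in> T) \<and> (\<forall>x. is_glb A le S x \<longrightarrow> x \<in> T))"

definition generated :: "'a set \<Rightarrow> ('a \<Rightarrow> 'a \<Rightarrow> bool) \<Rightarrow> 'a set \<Rightarrow> 'a set" where
  "generated A le X = \<Inter>{T. complete_sublattice A le T \<and> X \<subseteq> T}"

definition non_generator :: "'a set \<Rightarrow> ('a \<Rightarrow> 'a \<Rightarrow> bool) \<Rightarrow> 'a \<Rightarrow> bool" where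
  "non_generator A le a \<longleftrightarrow>
     (\<forall>X. X \<subseteq> A \<longrightarrow> generated A le (insert a X) = A \<longrightarrow> generated A le X = A)"

text \<open>The lattice [0,1] \<times> {0,1}; the two-element chain {0,1} is represented
by bool with False = 0 < True = 1. Order is componentwise.\<close>

definition L :: "(real \<times> bool) set" where
  "L = {0..1} \<times> UNIV"

definition leL :: "real \<times> bool \<Rightarrow> real \<times> bool \<Rightarrow> bool" where
  "leL p q \<longleftrightarrow> fst p \<le> fst q \<and> (snd p \<longrightarrow> snd q)"

end

theory Submission
  imports Defs "HOL-Analysis.Elementary_Metric_Spaces"
begin

(*
  If a complete sublattice S of L misses (c, 0) with 0 < c < 1, it can be enlarged to a proper
  complete sublattice that contains (c, 0); applied to S = <X> this shows <X, (c, 0)> = L only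
  if (c, 0) is already in <X>.  The points u with (u, 0) in S form a set F closed under sups and
  infs, so c sits in a gap (p, q) of F.  Meeting with (q, 0) projects every point of S into F,
  hence S lies in ([0, p] u {c} u [q, 1]) x {0, 1}.  If F has no point above c, the whole top
  layer together with [0, c] x {0} does the job.  The top layer follows by the self-duality
  (u, b) |-> (1 - u, 1 - b) of L.  The exceptional point (1, 0) generates L together with the
  proper complete sublattice ([0, 1] x {1}) u {(0, 0)}, and (0, 1) is its dual.  Since (0, 1)
  and (1, 0) are the inf and sup of non-generators, the non-generators are not closed but
  generate L.
*)

lemma complete_sublattice_lub_closed:
  "complete_sublattice A le T \<Longrightarrow> S \<subseteq> T \<Longrightarrow> is_lub A le S x \<Longrightarrow> x \<in> T"
  unfolding complete_sublattice_def by blast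

lemma complete_sublattice_glb_closed:
  "complete_sublattice A le T \<Longrightarrow> S \<subseteq> T \<Longrightarrow> is_glb A le S x \<Longrightarrow> x \<in> T"
  unfolding complete_sublattice_def by blast

lemma complete_sublattice_subset: "complete_sublattice A le T \<Longrightarrow> T \<subseteq> A"
  unfolding complete_sublattice_def by blast

lemma complete_sublattice_carrier: "complete_sublattice A le A"
  unfolding complete_sublattice_def is_lub_def is_glb_def by blast

lemma subset_generated: "X \<subseteq> generated A le X"
  unfolding generated_def by blast

lemma generated_least: "complete_sublattice A le T \<Longrightarrow> X \<subseteq> T \<Longrightarrow> generated A le X \<subseteq> T"
  unfolding generated_def by blast

lemma generated_subset_carrier: "X \<subseteq> A \<Longrightarrow> generated A le X \<subseteq> A"
  using generated_least[OF complete_sublattice_carrier] .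

lemma complete_sublattice_generated:
  assumes "X \<subseteq> A"
  shows "complete_sublattice A le (generated A le X)"
  unfolding complete_sublattice_def
proof (intro conjI allI impI)
  show "generated A le X \<subseteq> A"
    using generated_subset_carrier[OF assms] .
next
  fix S x
  assume "S \<subseteq> generated A le X"
  then have "S \<subseteq> T" if "complete_sublattice A le T" "X \<subseteq> T" for T
    using generated_least that by blast
  then show "is_lub A le S x \<Longrightarrow> x \<in> generated A le X"
    and "is_glb A le S x \<Longrightarrow> x \<in> generated A le X"
    unfolding generated_def
    by (blast intro: complete_sublattice_lub_closed complete_sublattice_glb_closed)+
qed

lemma generated_complete_sublattice:
  "complete_sublattice A le T \<Longrightarrow> generated A le T = T"
  by (meson generated_least order_refl subset_antisym subset_generated)

lemma is_lub_unique:
  "antisymp_on A le \<Longrightarrow> is_lub A le S x \<Longrightarrow> is_lub A le S y \<Longrightarrow> x = y"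
  unfolding is_lub_def antisymp_on_def by blast

lemma is_glb_unique:
  "antisymp_on A le \<Longrightarrow> is_glb A le S x \<Longrightarrow> is_glb A le S y \<Longrightarrow> x = y"
  unfolding is_glb_def antisymp_on_def by blast

lemma is_glb_iff_is_lub_converse: "is_glb A le S x \<longleftrightarrow> is_lub A (\<lambda>x y. le y x) S x"
  unfolding is_glb_def is_lub_def ..

lemma non_generatorI:
  assumes "\<And>S. complete_sublattice A le S \<Longrightarrow> a \<notin> S \<Longrightarrow>
             \<exists>T. complete_sublattice A le T \<and> S \<subseteq> T \<and> a \<in> T \<and> T \<noteq> A"
  shows "non_generator A le a"
  unfolding non_generator_def
proof (intro allI impI)
  fix X
  assume X: "X \<subseteq> A" and gen: "generated A le (insert a X) = A"
  let ?S = "generated A le X"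
  have "a \<in> ?S"
  proof (rule ccontr)
    assume "a \<notin> ?S"
    then obtain T where T: "complete_sublattice A le T" "?S \<subseteq> T" "a \<in> T" "T \<noteq> A"
      using assms[OF complete_sublattice_generated[OF X]] by blast
    have "insert a X \<subseteq> T"
      using T(2,3) subset_generated[of X A le] by blast
    then have "generated A le (insert a X) \<subseteq> T"
      by (rule generated_least[OF T(1)])
    then show False
      using gen complete_sublattice_subset[OF T(1)] T(4) by blast
  qed
  then have "generated A le (insert a X) \<subseteq> ?S"
    by (simp add: generated_least complete_sublattice_generated[OF X] subset_generated)
  then show "?S = A"
    using gen generated_subset_carrier[OF X] by blast
qed

locale order_reversing_involution =
  fixes A :: "'a set" and le :: "'a \<Rightarrow> 'a \<Rightarrow> bool" and f :: "'a \<Rightarrow> 'a"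
  assumes maps: "x \<in> A \<Longrightarrow> f x \<in> A"
    and involution: "x \<in> A \<Longrightarrow> f (f x) = x"
    and reverses: "x \<in> A \<Longrightarrow> y \<in> A \<Longrightarrow> le (f x) (f y) \<longleftrightarrow> le y x"
begin

lemma image_involution: "S \<subseteq> A \<Longrightarrow> f ` f ` S = S"
  by (force simp: image_image involution subset_iff)

lemma image_carrier: "f ` A = A"
  using image_involution maps by blast

lemma is_lub_image:
  assumes S: "S \<subseteq> A" and lub: "is_lub A le S x"
  shows "is_glb A le (f ` S) (f x)"
proof -
  have x: "x \<in> A" and upper: "\<forall>s\<in>S. le s x"
    and least: "\<And>y. y \<in> A \<Longrightarrow> \<forall>s\<in>S. le s y \<Longrightarrow> le x y"
    using lub unfolding is_lub_def by auto
  have "le y (f x)" if y: "y \<in> A" and lower: "\<forall>s\<in>S. le y (f s)" for y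
  proof -
    have "\<forall>s\<in>S. le s (f y)"
      using lower reverses[of "f y"] involution[OF y] maps[OF y] S by auto
    then have "le x (f y)"
      using least maps[OF y] by blast
    then show ?thesis
      using reverses[of "f y" x] involution[OF y] maps[OF y] x by simp
  qed
  then show ?thesis
    unfolding is_glb_def using maps[OF x] upper reverses x S by auto
qed

lemma is_glb_image: "S \<subseteq> A \<Longrightarrow> is_glb A le S x \<Longrightarrow> is_lub A le (f ` S) (f x)"
proof -
  interpret converse: order_reversing_involution A "\<lambda>x y. le y x" f
    by unfold_locales (auto simp: maps involution reverses)
  show "S \<subseteq> A \<Longrightarrow> is_glb A le S x \<Longrightarrow> is_lub A le (f ` S) (f x)"
    using converse.is_lub_image by (simp add: is_glb_iff_is_lub_converse)
qed

lemma complete_sublattice_image: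
  assumes T: "complete_sublattice A le T"
  shows "complete_sublattice A le (f ` T)"
  unfolding complete_sublattice_def
proof (intro conjI allI impI)
  have TA: "T \<subseteq> A"
    using complete_sublattice_subset[OF T] .
  then show "f ` T \<subseteq> A"
    using maps by blast
  fix S x
  assume S: "S \<subseteq> f ` T"
  then have fS: "f ` S \<subseteq> T" and SA: "S \<subseteq> A"
    using image_involution[OF TA] \<open>f ` T \<subseteq> A\<close> by blast+
  show "is_lub A le S x \<Longrightarrow> x \<in> f ` T"
    using complete_sublattice_glb_closed[OF T fS] is_lub_image[OF SA]
    by (metis image_eqI involution is_lub_def)
  show "is_glb A le S x \<Longrightarrow> x \<in> f ` T"
    using complete_sublattice_lub_closed[OF T fS] is_glb_image[OF SA]
    by (metis image_eqI involution is_glb_def)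
qed

lemma generated_image:
  assumes X: "X \<subseteq> A"
  shows "generated A le (f ` X) = f ` generated A le X"
proof
  show "generated A le (f ` X) \<subseteq> f ` generated A le X"
    by (intro generated_least complete_sublattice_image complete_sublattice_generated X)
      (simp add: image_mono subset_generated)
  have fX: "f ` X \<subseteq> A"
    using X maps by blast
  have "generated A le X \<subseteq> f ` generated A le (f ` X)"
    using generated_least[OF complete_sublattice_image[OF complete_sublattice_generated[OF fX]]]
      image_mono[OF subset_generated, of f "f ` X"] image_involution[OF X] by simp
  then have "f ` generated A le X \<subseteq> f ` f ` generated A le (f ` X)"
    by (rule image_mono)
  then show "f ` generated A le X \<subseteq> generated A le (f ` X)"
    using image_involution[OF generated_subset_carrier[OF fX]] by simp
qed

lemma non_generator_image:
  assumes a: "a \<in> A" and ng: "non_generator A le a"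
  shows "non_generator A le (f a)"
  unfolding non_generator_def
proof (intro allI impI)
  fix X
  assume X: "X \<subseteq> A" and gen: "generated A le (insert (f a) X) = A"
  have fX: "f ` X \<subseteq> A"
    using X maps by blast
  have "f ` insert (f a) X = insert a (f ` X)"
    using involution[OF a] by simp
  then have "generated A le (insert a (f ` X)) = A"
    using generated_image[of "insert (f a) X"] X maps[OF a] gen image_carrier by simp
  then have "generated A le (f ` X) = A"
    using ng fX unfolding non_generator_def by blast
  then have "f ` generated A le X = A"
    using generated_image[OF X] by simp
  then show "generated A le X = A"
    using image_involution[OF generated_subset_carrier[OF X]] image_carrier by metis
qed

end

lemma Sup_closed_gap_below:
  fixes F :: "real set"
  assumes Sup_closed: "\<And>Z. Z \<subseteq> F \<Longrightarrow> Z \<noteq> {} \<Longrightarrow> bdd_above Z \<Longrightarrow> Sup Z \<in> F"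
    and a: "a \<in> F" "a \<le> c" and c: "c \<notin> F"
  obtains p where "p \<in> F" "p < c" "\<And>u. u \<in> F \<Longrightarrow> u < c \<Longrightarrow> u \<le> p"
proof
  let ?Z = "F \<inter> {..c}"
  have Z: "?Z \<noteq> {}" "bdd_above ?Z"
    using a by (auto intro: bdd_above_Int2)
  show "Sup ?Z \<in> F"
    using Sup_closed[OF Int_lower1 Z] .
  with c show "Sup ?Z < c"
    using Z by (metis Int_iff atMost_iff cSup_least le_less)
  show "u \<le> Sup ?Z" if "u \<in> F" "u < c" for u
    using that Z by (auto intro: cSup_upper)
qed

lemma Inf_closed_gap_above:
  fixes F :: "real set"
  assumes Inf_closed: "\<And>Z. Z \<subseteq> F \<Longrightarrow> Z \<noteq> {} \<Longrightarrow> bdd_below Z \<Longrightarrow> Inf Z \<in> F"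
    and b: "b \<in> F" "c \<le> b" and c: "c \<notin> F"
  obtains q where "q \<in> F" "c < q" "\<And>u. u \<in> F \<Longrightarrow> c < u \<Longrightarrow> q \<le> u"
proof
  let ?Z = "F \<inter> {c..}"
  have Z: "?Z \<noteq> {}" "bdd_below ?Z"
    using b by (auto intro: bdd_below_Int2)
  show "Inf ?Z \<in> F"
    using Inf_closed[OF Int_lower1 Z] .
  with c show "c < Inf ?Z"
    using Z by (metis Int_iff atLeast_iff cInf_greatest le_less)
  show "Inf ?Z \<le> u" if "u \<in> F" "c < u" for u
    using that Z by (auto intro: cInf_lower)
qed

lemma antisymp_on_leL: "antisymp_on L leL"
  unfolding antisymp_on_def leL_def by (auto simp: prod_eq_iff)

lemma fst_image_L_bounded:
  assumes "S \<subseteq> L"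
  shows "bdd_above (fst ` S)" "bdd_below (fst ` S)"
proof -
  have "fst ` S \<subseteq> {0..1}"
    using assms by (auto simp: L_def)
  then show "bdd_above (fst ` S)" "bdd_below (fst ` S)"
    by (meson bdd_above_Icc bdd_above_mono, meson bdd_below_Icc bdd_below_mono)
qed

lemma is_lub_L:
  assumes S: "S \<subseteq> L" "S \<noteq> {}"
  shows "is_lub L leL S (Sup (fst ` S), \<exists>s\<in>S. snd s)"
proof -
  have F: "fst ` S \<subseteq> {0..1}"
    using S unfolding L_def by auto
  have bdd: "bdd_above (fst ` S)"
    using fst_image_L_bounded[OF S(1)] by simp
  obtain s where s: "s \<in> S"
    using S(2) by blast
  have "Sup (fst ` S) \<in> {0..1}"
    using F s bdd by (auto intro!: cSup_upper2[of "fst s"] cSup_least)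
  with F bdd S(2) show ?thesis
    unfolding is_lub_def leL_def L_def
    by (auto intro: cSup_upper cSup_least)
qed

lemma is_glb_L:
  assumes S: "S \<subseteq> L" "S \<noteq> {}"
  shows "is_glb L leL S (Inf (fst ` S), \<forall>s\<in>S. snd s)"
proof -
  have F: "fst ` S \<subseteq> {0..1}"
    using S unfolding L_def by auto
  have bdd: "bdd_below (fst ` S)"
    using fst_image_L_bounded[OF S(1)] by simp
  obtain s where s: "s \<in> S"
    using S(2) by blast
  have "Inf (fst ` S) \<in> {0..1}"
    using F s bdd by (auto intro!: cInf_lower2[of "fst s"] cInf_greatest)
  with F bdd S(2) show ?thesis
    unfolding is_glb_def leL_def L_def
    by (auto intro: cInf_lower cInf_greatest)
qed

lemma is_lub_L_empty: "is_lub L leL {} (0, False)"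
  unfolding is_lub_def L_def leL_def by auto

lemma is_glb_L_empty: "is_glb L leL {} (1, True)"
  unfolding is_glb_def L_def leL_def by auto

lemma complete_sublattice_L_iff:
  "complete_sublattice L leL T \<longleftrightarrow> T \<subseteq> L \<and> (0, False) \<in> T \<and> (1, True) \<in> T \<and>
     (\<forall>S\<subseteq>T. S \<noteq> {} \<longrightarrow> (Sup (fst ` S), \<exists>s\<in>S. snd s) \<in> T \<and> (Inf (fst ` S), \<forall>s\<in>S. snd s) \<in> T)"
    (is "_ \<longleftrightarrow> ?closed")
proof
  assume T: "complete_sublattice L leL T"
  have TL: "T \<subseteq> L"
    using complete_sublattice_subset[OF T] .
  have "(Sup (fst ` S), \<exists>s\<in>S. snd s) \<in> T \<and> (Inf (fst ` S), \<forall>s\<in>S. snd s) \<in> T"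
    if S: "S \<subseteq> T" "S \<noteq> {}" for S
  proof -
    have "S \<subseteq> L"
      using S(1) TL by (rule subset_trans)
    then show ?thesis
      using complete_sublattice_lub_closed[OF T S(1) is_lub_L] complete_sublattice_glb_closed[OF T S(1) is_glb_L]
        S(2) by blast
  qed
  moreover have "(0, False) \<in> T" "(1, True) \<in> T"
    using complete_sublattice_lub_closed[OF T empty_subsetI is_lub_L_empty]
      complete_sublattice_glb_closed[OF T empty_subsetI is_glb_L_empty] .
  ultimately show ?closed
    using TL by blast
next
  assume closed: ?closed
  show "complete_sublattice L leL T"
    unfolding complete_sublattice_def
  proof (intro conjI allI impI)
    show "T \<subseteq> L"
      using closed by blast
    fix S x
    assume "S \<subseteq> T"
    then have "S \<subseteq> L"
      using closed by blast
    show "x \<in> T" if lub: "is_lub L leL S x"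
    proof (cases "S = {}")
      case True
      then show ?thesis
        using is_lub_unique[OF antisymp_on_leL lub] is_lub_L_empty closed by auto
    next
      case False
      then show ?thesis
        using is_lub_unique[OF antisymp_on_leL lub is_lub_L[OF \<open>S \<subseteq> L\<close> False]]
          closed \<open>S \<subseteq> T\<close> by auto
    qed
    show "x \<in> T" if glb: "is_glb L leL S x"
    proof (cases "S = {}")
      case True
      then show ?thesis
        using is_glb_unique[OF antisymp_on_leL glb] is_glb_L_empty closed by auto
    next
      case False
      then show ?thesis
        using is_glb_unique[OF antisymp_on_leL glb is_glb_L[OF \<open>S \<subseteq> L\<close> False]]
          closed \<open>S \<subseteq> T\<close> by auto
    qed
  qed
qed

lemma complete_sublattice_False_layer_le:
  assumes "0 \<le> c" "c \<le> 1"
  shows "complete_sublattice L leL {x \<in> L. \<not> snd x \<longrightarrow> fst x \<le> c}"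
  unfolding complete_sublattice_L_iff
proof (intro conjI allI impI)
  fix S
  assume S: "S \<subseteq> {x \<in> L. \<not> snd x \<longrightarrow> fst x \<le> c}" "S \<noteq> {}"
  then have "S \<subseteq> L"
    by blast
  have "Sup (fst ` S) \<le> c" if "\<forall>s\<in>S. \<not> snd s"
    using S that by (auto intro!: cSup_least)
  then show "(Sup (fst ` S), \<exists>s\<in>S. snd s) \<in> {x \<in> L. \<not> snd x \<longrightarrow> fst x \<le> c}"
    using is_lub_L[OF \<open>S \<subseteq> L\<close> S(2)] by (auto simp: is_lub_def)
  have "Inf (fst ` S) \<le> c" if "\<exists>s\<in>S. \<not> snd s"
    using S that fst_image_L_bounded(2)[OF \<open>S \<subseteq> L\<close>] by (auto intro: cInf_lower2)
  then show "(Inf (fst ` S), \<forall>s\<in>S. snd s) \<in> {x \<in> L. \<not> snd x \<longrightarrow> fst x \<le> c}"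
    using is_glb_L[OF \<open>S \<subseteq> L\<close> S(2)] by (auto simp: is_glb_def)
qed (use assms in \<open>auto simp: L_def\<close>)

lemma complete_sublattice_closed_times_UNIV:
  assumes C: "closed C" "C \<subseteq> {0..1}" "0 \<in> C" "1 \<in> C"
  shows "complete_sublattice L leL (C \<times> UNIV)"
  unfolding complete_sublattice_L_iff
proof (intro conjI allI impI)
  fix S :: "(real \<times> bool) set"
  assume S: "S \<subseteq> C \<times> UNIV" "S \<noteq> {}"
  then have "fst ` S \<subseteq> C" "fst ` S \<noteq> {}" and "S \<subseteq> L"
    using C(2) by (auto simp: L_def)
  with fst_image_L_bounded[OF \<open>S \<subseteq> L\<close>] show "(Sup (fst ` S), \<exists>s\<in>S. snd s) \<in> C \<times> UNIV"
    and "(Inf (fst ` S), \<forall>s\<in>S. snd s) \<in> C \<times> UNIV"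
    using closed_subset_contains_Sup closed_subset_contains_Inf C(1) by auto
qed (use C in \<open>auto simp: L_def\<close>)

lemma proper_complete_sublattice_extends_False:
  assumes S: "complete_sublattice L leL S" and c: "0 < c" "c < 1" and notin: "(c, False) \<notin> S"
  shows "\<exists>T. complete_sublattice L leL T \<and> S \<subseteq> T \<and> (c, False) \<in> T \<and> T \<noteq> L"
proof -
  have SL: "S \<subseteq> L" and bot: "(0, False) \<in> S"
    and S_closed: "\<And>Y. Y \<subseteq> S \<Longrightarrow> Y \<noteq> {} \<Longrightarrow>
       (Sup (fst ` Y), \<exists>y\<in>Y. snd y) \<in> S \<and> (Inf (fst ` Y), \<forall>y\<in>Y. snd y) \<in> S"
    using S unfolding complete_sublattice_L_iff by blast+
  define F where "F = {u. (u, False) \<in> S}"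
  have F01: "F \<subseteq> {0..1}"
    using SL by (auto simp: F_def L_def)
  have F_Sup: "Sup Z \<in> F" and F_Inf: "Inf Z \<in> F" if "Z \<subseteq> F" "Z \<noteq> {}" for Z
    using S_closed[of "(\<lambda>u. (u, False)) ` Z"] that by (auto simp: F_def image_image)
  have "c \<notin> F"
    using notin by (simp add: F_def)
  obtain p where p: "p \<in> F" "p < c" "\<And>u. u \<in> F \<Longrightarrow> u < c \<Longrightarrow> u \<le> p"
    using Sup_closed_gap_below[of F 0 c] F_Sup bot c \<open>c \<notin> F\<close> by (auto simp: F_def)
  show ?thesis
  proof (cases "\<exists>b\<in>F. c < b")
    case False
    let ?T = "{x \<in> L. \<not> snd x \<longrightarrow> fst x \<le> c}"
    have "S \<subseteq> ?T"
    proof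
      fix x
      assume "x \<in> S"
      then have "\<not> snd x \<longrightarrow> fst x \<in> F"
        by (cases x) (auto simp: F_def)
      with False \<open>x \<in> S\<close> SL show "x \<in> ?T"
        by (auto simp: not_less)
    qed
    moreover have "complete_sublattice L leL ?T"
      using c by (intro complete_sublattice_False_layer_le) auto
    moreover have "(c, False) \<in> ?T" "(1, False) \<in> L - ?T"
      using c by (auto simp: L_def)
    ultimately show ?thesis
      by blast
  next
    case True
    then obtain b where "b \<in> F" "c < b"
      by blast
    obtain q where q: "q \<in> F" "c < q" "\<And>u. u \<in> F \<Longrightarrow> c < u \<Longrightarrow> q \<le> u"
      using Inf_closed_gap_above[of F b c] F_Inf \<open>b \<in> F\<close> \<open>c < b\<close> \<open>c \<notin> F\<close> by auto
    have meet: "min (fst x) q \<in> F" if "x \<in> S" for x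
    proof -
      have "(Inf (fst ` {x, (q, False)}), \<forall>y\<in>{x, (q, False)}. snd y) \<in> S"
        using S_closed[of "{x, (q, False)}"] q(1) that by (simp add: F_def)
      then show ?thesis
        by (simp add: F_def cInf_insert inf_min)
    qed
    have gap: "fst x \<le> p \<or> q \<le> fst x" if x: "x \<in> S" for x
    proof -
      consider "min (fst x) q < c" | "c < min (fst x) q"
        using meet[OF x] \<open>c \<notin> F\<close> by (metis linorder_neqE)
      then show ?thesis
      proof cases
        case 1
        then show ?thesis
          using p(3)[OF meet[OF x]] q(2) by (auto simp: min_def split: if_splits)
      next
        case 2
        then show ?thesis
          using q(3)[OF meet[OF x]] by (auto simp: min_def split: if_splits)
      qed
    qed
    let ?C = "{0..p} \<union> {c} \<union> {q..1}"
    have "closed ?C"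
      by (intro closed_Un) auto
    then have "complete_sublattice L leL (?C \<times> UNIV)"
      using p q c F01 by (intro complete_sublattice_closed_times_UNIV) auto
    moreover have "S \<subseteq> ?C \<times> UNIV"
      using gap SL by (force simp: L_def)
    moreover have "((p + c) / 2, False) \<in> L - ?C \<times> UNIV"
      using p q c F01 by (auto simp: L_def)
    ultimately show ?thesis
      by blast
  qed
qed

lemma non_generator_False:
  assumes "0 \<le> c" "c < 1"
  shows "non_generator L leL (c, False)"
proof (rule non_generatorI)
  fix S
  assume S: "complete_sublattice L leL S" and notin: "(c, False) \<notin> S"
  have "(0, False) \<in> S"
    using S unfolding complete_sublattice_L_iff by blast
  with notin assms have "0 < c"
    by (cases "c = 0") auto
  with assms S notin show "\<exists>T. complete_sublattice L leL T \<and> S \<subseteq> T \<and> (c, False) \<in> T \<and> T \<noteq> L"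
    by (intro proper_complete_sublattice_extends_False)
qed

definition dualL :: "real \<times> bool \<Rightarrow> real \<times> bool" where
  "dualL x = (1 - fst x, \<not> snd x)"

interpretation L_dual: order_reversing_involution L leL dualL
  by unfold_locales (auto simp: dualL_def L_def leL_def)

lemma non_generator_True:
  assumes "0 < c" "c \<le> 1"
  shows "non_generator L leL (c, True)"
  using L_dual.non_generator_image[of "(1 - c, False)"] non_generator_False[of "1 - c"] assms
  by (simp add: L_def dualL_def)

lemma not_non_generator_1_False: "\<not> non_generator L leL (1, False)"
proof
  assume ng: "non_generator L leL (1, False)"
  let ?J = "{x \<in> L. \<not> snd x \<longrightarrow> fst x \<le> 0}"
  have J: "complete_sublattice L leL ?J"
    by (rule complete_sublattice_False_layer_le) auto
  let ?G = "generated L leL (insert (1, False) ?J)"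
  have G: "complete_sublattice L leL ?G"
    by (rule complete_sublattice_generated) (auto simp: L_def)
  have False_layer: "(u, False) \<in> ?G" if "u \<in> {0..1}" for u
  proof -
    let ?Y = "{(u, True), (1, False)}"
    have Y: "?Y \<subseteq> ?G"
      using subset_generated that by (fastforce simp: L_def)
    then have "(Inf (fst ` ?Y), \<forall>y\<in>?Y. snd y) \<in> ?G"
      using complete_sublattice_glb_closed[OF G Y is_glb_L] complete_sublattice_subset[OF G] by blast
    with that show ?thesis
      by (simp add: cInf_insert inf_min)
  qed
  have "(u, b) \<in> ?G" if "u \<in> {0..1}" for u b
    using False_layer subset_generated that by (cases b) (fastforce simp: L_def)+
  then have "?G = L"
    using complete_sublattice_subset[OF G] by (auto simp: L_def)
  with Collect_subset have "generated L leL ?J = L"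
    by (rule ng[unfolded non_generator_def, rule_format])
  moreover have "(1, False) \<in> L - ?J"
    by (simp add: L_def)
  ultimately show False
    using generated_complete_sublattice[OF J] by simp
qed

lemma not_non_generator_0_True: "\<not> non_generator L leL (0, True)"
  using L_dual.non_generator_image[of "(0, True)"] not_non_generator_1_False
  by (auto simp: L_def dualL_def)

lemma non_generator_L_iff:
  assumes "a \<in> L"
  shows "non_generator L leL a \<longleftrightarrow> a \<noteq> (0, True) \<and> a \<noteq> (1, False)"
proof (cases a)
  case (Pair c b)
  with assms show ?thesis
    using non_generator_False non_generator_True not_non_generator_1_False not_non_generator_0_True
    by (cases b) (auto simp: L_def less_le)
qed

lemma is_glb_L_open_True_layer: "is_glb L leL ((\<lambda>u. (u, True)) ` {0<..<1}) (0, True)"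
  using is_glb_L[of "(\<lambda>u. (u, True)) ` {0<..<1}"] by (simp add: image_image L_def image_subset_iff)

lemma is_lub_L_open_False_layer: "is_lub L leL ((\<lambda>u. (u, False)) ` {0<..<1}) (1, False)"
  using is_lub_L[of "(\<lambda>u. (u, False)) ` {0<..<1}"] by (simp add: image_image L_def image_subset_iff)

theorem proposition5:
  shows "(\<forall>a\<in>L. non_generator L leL a \<longleftrightarrow> a \<noteq> (0, True) \<and> a \<noteq> (1, False))
    \<and> \<not> complete_sublattice L leL {a\<in>L. non_generator L leL a}
    \<and> generated L leL {a\<in>L. non_generator L leL a} = L"
proof (intro conjI)
  let ?\<Gamma> = "{a\<in>L. non_generator L leL a}"
  show "\<forall>a\<in>L. non_generator L leL a \<longleftrightarrow> a \<noteq> (0, True) \<and> a \<noteq> (1, False)"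
    using non_generator_L_iff by blast
  then have \<Gamma>: "?\<Gamma> = L - {(0, True), (1, False)}"
    by auto
  let ?I = "{0<..<1::real}"
  have layers: "(\<lambda>u. (u, True)) ` ?I \<subseteq> ?\<Gamma>" "(\<lambda>u. (u, False)) ` ?I \<subseteq> ?\<Gamma>"
    unfolding \<Gamma> by (auto simp: L_def)
  show "\<not> complete_sublattice L leL ?\<Gamma>"
    using complete_sublattice_glb_closed[OF _ layers(1) is_glb_L_open_True_layer] \<Gamma> by blast
  have G: "complete_sublattice L leL (generated L leL ?\<Gamma>)"
    by (rule complete_sublattice_generated) blast
  have \<Gamma>_G: "?\<Gamma> \<subseteq> generated L leL ?\<Gamma>"
    by (rule subset_generated)
  have "(0, True) \<in> generated L leL ?\<Gamma>" "(1, False) \<in> generated L leL ?\<Gamma>"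
    using complete_sublattice_glb_closed[OF G subset_trans[OF layers(1) \<Gamma>_G] is_glb_L_open_True_layer]
      complete_sublattice_lub_closed[OF G subset_trans[OF layers(2) \<Gamma>_G] is_lub_L_open_False_layer] .
  with \<Gamma> \<Gamma>_G complete_sublattice_subset[OF G] show "generated L leL ?\<Gamma> = L"
    by blast
qed

end
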